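(* Let $S$ be a numerical semigroup with minimal generating set $P$ and let $G=G(S)=(V,E)$. Then every vertex of $G$ of maximal degree belongs to $P$. Moreover, for every $r\ge1$, the set of vertices of $G$ of degree $r$ is an antichain under divisibility, i.e. there are no two distinct vertices $v_1,v_2$ of degree $r$ with $v_2-v_1\in S$.
   Context: A numerical semigroup is a subset $S\subseteq\mathbb N$ containing $0$, closed under addition, with finite complement; $S^*=S\setminus\{0\}$, $m=\min S^*$, $P=S^*\setminus(S^*+S^* )$. $X=\{s\in S^*: s-m\notin S\}$. The graph $G(S)$ has edge set all subsets $\{x,y\}\subseteq X$ ($x=y$ allowed) with $x+y\in X$, and vertex set $V$ the endvertices of these edges. $N_G(x)=\{y\in X: x+y\in X\}$ and $\deg(x)=|N_G(x)|$. *)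

theory Defs
  imports Main
begin

definition numerical_semigroup :: "nat set \<Rightarrow> bool" where
  "numerical_semigroup S \<longleftrightarrow> 0 \<in> S \<and> (\<forall>x\<in>S. \<forall>y\<in>S. x + y \<in> S) \<and> finite (UNIV - S)"

definition nz :: "nat set \<Rightarrow> nat set" where
  "nz S = S - {0}"

definition mult :: "nat set \<Rightarrow> nat" where
  "mult S = (LEAST x. x \<in> nz S)"

definition mingens :: "nat set \<Rightarrow> nat set" where
  "mingens S = nz S - {a + b | a b. a \<in> nz S \<and> b \<in> nz S}"

definition Xset :: "nat set \<Rightarrow> nat set" where
  "Xset S = {s \<in> nz S. s - mult S \<notin> S}"

definition gedges :: "nat set \<Rightarrow> nat set set" where
  "gedges S = {{x, y} | x y. x \<in> Xset S \<and> y \<in> Xset S \<and> x + y \<in> Xset S}"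

definition gverts :: "nat set \<Rightarrow> nat set" where
  "gverts S = \<Union> (gedges S)"

definition gnbrs :: "nat set \<Rightarrow> nat \<Rightarrow> nat set" where
  "gnbrs S x = {y \<in> Xset S. x + y \<in> Xset S}"

definition gdeg :: "nat set \<Rightarrow> nat \<Rightarrow> nat" where
  "gdeg S x = card (gnbrs S x)"

end

theory Submission
  imports Defs
begin

text \<open>
  \<open>X\<close> is the Apery set of \<open>S\<close> with respect to \<open>m\<close> minus \<open>0\<close>, so a nonzero summand (in \<open>S\<close>)
  of an element of \<open>X\<close> lies in \<open>X\<close> again. Consequently, if \<open>v\<^sub>1 < v\<^sub>2\<close> are in \<open>X\<close> with
  \<open>e = v\<^sub>2 - v\<^sub>1 \<in> S\<close>, then \<open>N(v\<^sub>2) \<subseteq> N(v\<^sub>1)\<close>, and for the largest \<open>y\<close> in \<open>{0} \<union> N(v\<^sub>2)\<close> the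
  element \<open>y + e\<close> is a neighbour of \<open>v\<^sub>1\<close> but not of \<open>v\<^sub>2\<close>. So the degree strictly decreases
  along divisibility in \<open>S\<close>, which gives the antichain property. A vertex \<open>v \<notin> P\<close> is a sum
  \<open>a + b\<close> of two elements of \<open>X\<close>, so \<open>a\<close> is a vertex dividing \<open>v\<close>, of larger degree.
\<close>

lemma numerical_semigroup_add:
  "numerical_semigroup S \<Longrightarrow> x \<in> S \<Longrightarrow> y \<in> S \<Longrightarrow> x + y \<in> S"
  by (simp add: numerical_semigroup_def)

lemma Xset_memD:
  assumes "x \<in> Xset S"
  shows "x \<in> S" "x \<noteq> 0"
  using assms by (auto simp: Xset_def nz_def)

lemma Xset_summand:
  assumes S: "numerical_semigroup S" and w: "w \<in> Xset S" and "w = a + b"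
    and "a \<in> S" "a \<noteq> 0" "b \<in> S"
  shows "a \<in> Xset S"
proof -
  have a: "a \<in> nz S" using assms by (simp add: nz_def)
  then have "mult S \<le> a" unfolding mult_def by (rule Least_le)
  then have "w - mult S = (a - mult S) + b" using \<open>w = a + b\<close> by simp
  moreover have "w - mult S \<notin> S" using w by (simp add: Xset_def)
  ultimately have "a - mult S \<notin> S" using numerical_semigroup_add[OF S _ \<open>b \<in> S\<close>] by metis
  with a show ?thesis by (simp add: Xset_def)
qed

lemma Xset_finite:
  assumes "numerical_semigroup S"
  shows "finite (Xset S)"
proof -
  obtain B where B: "\<forall>n \<in> UNIV - S. n < B"
    using assms finite_nat_set_iff_bounded by (auto simp: numerical_semigroup_def)
  have "s < B + mult S" if "s \<in> Xset S" for s
  proof -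
    have "s - mult S < B" using that B by (simp add: Xset_def)
    then show ?thesis by arith
  qed
  then have "Xset S \<subseteq> {..< B + mult S}" by blast
  then show ?thesis by (rule finite_subset) simp
qed

lemma gnbrs_finite: "numerical_semigroup S \<Longrightarrow> finite (gnbrs S x)"
  using Xset_finite[of S] unfolding gnbrs_def by auto

lemma gverts_subset_Xset: "gverts S \<subseteq> Xset S"
  unfolding gverts_def gedges_def by auto

lemma gnbrs_antimono:
  assumes S: "numerical_semigroup S" and v\<^sub>1: "v\<^sub>1 \<in> Xset S"
    and "v\<^sub>1 \<le> v\<^sub>2" and d: "v\<^sub>2 - v\<^sub>1 \<in> S"
  shows "gnbrs S v\<^sub>2 \<subseteq> gnbrs S v\<^sub>1"
proof
  fix y assume "y \<in> gnbrs S v\<^sub>2"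
  then have y: "y \<in> Xset S" and v\<^sub>2y: "v\<^sub>2 + y \<in> Xset S" by (auto simp: gnbrs_def)
  have sum: "v\<^sub>2 + y = (v\<^sub>1 + y) + (v\<^sub>2 - v\<^sub>1)" using \<open>v\<^sub>1 \<le> v\<^sub>2\<close> by simp
  have "v\<^sub>1 + y \<in> S"
    using numerical_semigroup_add[OF S Xset_memD(1)[OF v\<^sub>1] Xset_memD(1)[OF y]] .
  then have "v\<^sub>1 + y \<in> Xset S"
    using Xset_summand[OF S v\<^sub>2y sum _ _ d] Xset_memD(2)[OF y] by simp
  with y show "y \<in> gnbrs S v\<^sub>1" by (simp add: gnbrs_def)
qed

lemma gnbrs_shift:
  assumes S: "numerical_semigroup S" and v\<^sub>1: "v\<^sub>1 \<in> Xset S"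
    and "v\<^sub>1 < v\<^sub>2" and d: "v\<^sub>2 - v\<^sub>1 \<in> S" and "y \<in> S" and v\<^sub>2y: "v\<^sub>2 + y \<in> Xset S"
  shows "y + (v\<^sub>2 - v\<^sub>1) \<in> gnbrs S v\<^sub>1"
proof -
  have sum: "v\<^sub>2 + y = (y + (v\<^sub>2 - v\<^sub>1)) + v\<^sub>1" using \<open>v\<^sub>1 < v\<^sub>2\<close> by simp
  have "y + (v\<^sub>2 - v\<^sub>1) \<in> S"
    using numerical_semigroup_add[OF S \<open>y \<in> S\<close> d] .
  then have "y + (v\<^sub>2 - v\<^sub>1) \<in> Xset S"
    using Xset_summand[OF S v\<^sub>2y sum _ _ Xset_memD(1)[OF v\<^sub>1]] \<open>v\<^sub>1 < v\<^sub>2\<close> by simp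
  moreover have "v\<^sub>1 + (y + (v\<^sub>2 - v\<^sub>1)) = v\<^sub>2 + y" using \<open>v\<^sub>1 < v\<^sub>2\<close> by simp
  ultimately show ?thesis using v\<^sub>2y unfolding gnbrs_def by (simp add: ac_simps)
qed

lemma gdeg_strict_antimono:
  assumes S: "numerical_semigroup S" and "v\<^sub>1 \<in> Xset S" "v\<^sub>2 \<in> Xset S"
    and "v\<^sub>1 < v\<^sub>2" "v\<^sub>2 - v\<^sub>1 \<in> S"
  shows "gdeg S v\<^sub>2 < gdeg S v\<^sub>1"
proof -
  define y where "y = Max (insert 0 (gnbrs S v\<^sub>2))"
  have "y \<in> insert 0 (gnbrs S v\<^sub>2)"
    unfolding y_def by (rule Max_in) (simp_all add: gnbrs_finite[OF S])
  then have "y \<in> S" "v\<^sub>2 + y \<in> Xset S"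
    using assms numerical_semigroup_def by (auto simp: gnbrs_def Xset_memD)
  then have new: "y + (v\<^sub>2 - v\<^sub>1) \<in> gnbrs S v\<^sub>1"
    using gnbrs_shift[OF S \<open>v\<^sub>1 \<in> Xset S\<close> \<open>v\<^sub>1 < v\<^sub>2\<close> \<open>v\<^sub>2 - v\<^sub>1 \<in> S\<close>] by blast
  have "z \<le> y" if "z \<in> gnbrs S v\<^sub>2" for z
    unfolding y_def using that by (simp add: gnbrs_finite[OF S])
  then have "y + (v\<^sub>2 - v\<^sub>1) \<notin> gnbrs S v\<^sub>2"
    using \<open>v\<^sub>1 < v\<^sub>2\<close> by fastforce
  moreover have "gnbrs S v\<^sub>2 \<subseteq> gnbrs S v\<^sub>1"
    using gnbrs_antimono[OF S \<open>v\<^sub>1 \<in> Xset S\<close> less_imp_le] assms by blast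
  ultimately have "gnbrs S v\<^sub>2 \<subset> gnbrs S v\<^sub>1" using new by blast
  then show ?thesis
    unfolding gdeg_def by (rule psubset_card_mono[OF gnbrs_finite[OF S]])
qed

lemma gverts_left_summand:
  assumes S: "numerical_semigroup S" and v: "v \<in> Xset S"
    and "a \<in> nz S" "b \<in> nz S" "v = a + b"
  shows "a \<in> gverts S"
proof -
  have "a \<in> Xset S" "b \<in> Xset S"
    using Xset_summand[OF S v] assms by (auto simp: nz_def)
  with assms have "{a, b} \<in> gedges S" unfolding gedges_def by blast
  then show ?thesis unfolding gverts_def by blast
qed

theorem corollary4p8:
  fixes S :: "nat set"
  assumes "numerical_semigroup S"
  shows "(\<forall>v \<in> gverts S. (\<forall>w \<in> gverts S. gdeg S w \<le> gdeg S v) \<longrightarrow> v \<in> mingens S)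
       \<and> (\<forall>r \<ge> 1. \<forall>v1 \<in> gverts S. \<forall>v2 \<in> gverts S.
            gdeg S v1 = r \<and> gdeg S v2 = r \<and> v1 \<noteq> v2 \<longrightarrow> \<not> (v1 \<le> v2 \<and> v2 - v1 \<in> S))"
proof (intro conjI ballI impI allI)
  fix v assume v: "v \<in> gverts S" and max: "\<forall>w \<in> gverts S. gdeg S w \<le> gdeg S v"
  show "v \<in> mingens S"
  proof (rule ccontr)
    assume "v \<notin> mingens S"
    moreover have vX: "v \<in> Xset S" using v gverts_subset_Xset by blast
    ultimately obtain a b where ab: "a \<in> nz S" "b \<in> nz S" "v = a + b"
      unfolding mingens_def Xset_def by blast
    then have a: "a \<in> gverts S" by (rule gverts_left_summand[OF assms vX])
    have "a < v" "v - a \<in> S" using ab by (auto simp: nz_def)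
    with a have "gdeg S v < gdeg S a"
      using gdeg_strict_antimono[OF assms _ vX] gverts_subset_Xset by blast
    with a max show False by (meson leD)
  qed
next
  fix r v1 v2 assume "v1 \<in> gverts S" "v2 \<in> gverts S"
    and deg: "gdeg S v1 = r \<and> gdeg S v2 = r \<and> v1 \<noteq> v2"
  then have X: "v1 \<in> Xset S" "v2 \<in> Xset S" using gverts_subset_Xset by blast+
  show "\<not> (v1 \<le> v2 \<and> v2 - v1 \<in> S)"
  proof
    assume "v1 \<le> v2 \<and> v2 - v1 \<in> S"
    with deg have "v1 < v2" "v2 - v1 \<in> S" by auto
    then have "gdeg S v2 < gdeg S v1" by (rule gdeg_strict_antimono[OF assms X])
    with deg show False by simp
  qed
qed

end
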